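(* Let $X$ be a Banach space and let $C$ be a convex weak*-compact subset of $X^{**}$. Then there is a filtering family $(C_\alpha)_{\alpha\in\Gamma}$ of convex, bounded, closed subsets of $X$ such that $C=\bigcap_{\alpha\in\Gamma}\overline{C_\alpha}^{w^*}$.
   Context: Regard $X$ as a subspace of $X^{**}$ via the canonical embedding; $\overline{A}^{w^*}$ denotes the weak*-closure in $X^{**}$ of $A\subset X$. A partially ordered set $\Gamma$ is filtering if for any $i,j\in\Gamma$ there is $k\in\Gamma$ with $i\le k$ and $j\le k$. A family of sets $(C_\alpha)_{\alpha\in\Gamma}$ indexed by a filtering partially ordered set $\Gamma$ is called filtering if $\alpha\le\beta$ implies $C_\beta\subset C_\alpha$. *)

theory Defs
  imports "HOL-Analysis.Analysis"
begin

(* The dual of a real Banach space 'a is ('a =>L real); the bidual is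
  (('a =>L real) =>L real). *)

definition canon_embed :: "'a::banach \<Rightarrow> (('a \<Rightarrow>\<^sub>L real) \<Rightarrow>\<^sub>L real)" where
  "canon_embed x = Blinfun (\<lambda>f. blinfun_apply f x)"

definition weak_star :: "(('a::real_normed_vector \<Rightarrow>\<^sub>L real) \<Rightarrow>\<^sub>L real) topology" where
  "weak_star = topology_generated_by
     {{\<phi>. blinfun_apply \<phi> f \<in> U} | f U. open (U :: real set)}"

definition filtering_poset :: "'i set \<Rightarrow> ('i \<times> 'i) set \<Rightarrow> bool" where
  "filtering_poset \<Gamma> r \<longleftrightarrow> partial_order_on \<Gamma> r \<and>
     (\<forall>i\<in>\<Gamma>. \<forall>j\<in>\<Gamma>. \<exists>k\<in>\<Gamma>. (i, k) \<in> r \<and> (j, k) \<in> r)"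

definition filtering_family :: "'i set \<Rightarrow> ('i \<times> 'i) set \<Rightarrow> ('i \<Rightarrow> 'b set) \<Rightarrow> bool" where
  "filtering_family \<Gamma> r Cs \<longleftrightarrow> filtering_poset \<Gamma> r \<and>
     (\<forall>\<alpha>\<in>\<Gamma>. \<forall>\<beta>\<in>\<Gamma>. (\<alpha>, \<beta>) \<in> r \<longrightarrow> Cs \<beta> \<subseteq> Cs \<alpha>)"

end

theory Submission
  imports Defs
begin

text \<open>By the uniform boundedness principle the weak*-compact set \<open>C\<close> lies in a ball of radius
  \<open>M\<close> of \<open>X**\<close>. For a finite \<open>F \<subseteq> X*\<close> and \<open>e > 0\<close> let \<open>C\<^sub>F\<^sub>,\<^sub>e\<close> consist of the points of the
  \<open>M\<close>-ball of \<open>X\<close> that agree up to \<open>e\<close> on \<open>F\<close> with some element of \<open>C\<close>; it is convex because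
  \<open>C\<close> is, and it shrinks as \<open>(F, e)\<close> is refined. Helly's lemma (an element of norm \<open>\<le> M\<close> of
  \<open>X**\<close> is matched, on finitely many functionals and up to any \<open>\<eta> > 0\<close>, by an element of norm
  \<open>\<le> M\<close> of \<open>X\<close>) puts \<open>C\<close> inside the weak*-closure of every \<open>C\<^sub>F\<^sub>,\<^sub>e\<close>. Conversely, if \<open>\<psi> \<notin> C\<close>,
  compactness yields a finite \<open>F\<close> and \<open>s > 0\<close> such that every element of \<open>C\<close> differs from \<open>\<psi>\<close>
  by more than \<open>s\<close> on some \<open>f \<in> F\<close>, and then \<open>\<psi>\<close> is not in the weak*-closure of \<open>C\<^sub>F\<^sub>,\<^sub>s\<^sub>/\<^sub>2\<close>.\<close>

lemma canon_embed_apply [simp]: "blinfun_apply (canon_embed x) f = blinfun_apply f x"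
proof -
  have "bounded_linear (\<lambda>f::'a \<Rightarrow>\<^sub>L real. blinfun_apply f x)"
    by (rule bounded_bilinear.bounded_linear_left[OF bounded_bilinear_blinfun_apply])
  then show ?thesis
    unfolding canon_embed_def by (simp add: bounded_linear_Blinfun_apply)
qed

lemma topspace_weak_star [simp]: "topspace weak_star = UNIV"
  unfolding weak_star_def topology_generated_by_topspace by auto

lemma openin_weak_star_evaluation:
  "open U \<Longrightarrow> openin weak_star {\<phi>. blinfun_apply \<phi> f \<in> U}"
  unfolding weak_star_def by (rule topology_generated_by_Basis) auto

lemma continuous_map_weak_star_evaluation:
  "continuous_map weak_star euclideanreal (\<lambda>\<phi>. blinfun_apply \<phi> f)"
  unfolding continuous_map_def using openin_weak_star_evaluation by auto

lemma continuous_map_canon_embed: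
  "continuous_map euclidean weak_star (canon_embed :: 'a::banach \<Rightarrow> _)"
  unfolding weak_star_def
proof (rule continuous_on_generated_topo)
  fix V :: "(('a \<Rightarrow>\<^sub>L real) \<Rightarrow>\<^sub>L real) set" assume "V \<in> {{\<phi>. blinfun_apply \<phi> f \<in> U} | f U. open (U :: real set)}"
  then obtain f U where "V = {\<phi>. blinfun_apply \<phi> f \<in> U}" "open U" by blast
  moreover have "open (blinfun_apply f -` U)"
    using \<open>open U\<close> by (intro open_vimage linear_continuous_on blinfun.bounded_linear_right)
  ultimately show "openin euclidean (canon_embed -` V \<inter> topspace euclidean)"
    by (simp add: vimage_def)
qed auto

lemma openin_weak_star_finite_nbhd:
  assumes "finite G"
  shows "openin weak_star {\<xi>. \<forall>g\<in>G. \<bar>blinfun_apply \<xi> g - c g\<bar> < \<delta>}"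
  using assms
proof (induction G)
  case empty
  then show ?case using openin_topspace[of weak_star] by simp
next
  case (insert g G)
  have split: "{\<xi>. \<forall>h\<in>insert g G. \<bar>blinfun_apply \<xi> h - c h\<bar> < \<delta>}
     = {\<xi>. blinfun_apply \<xi> g \<in> ball (c g) \<delta>} \<inter> {\<xi>. \<forall>h\<in>G. \<bar>blinfun_apply \<xi> h - c h\<bar> < \<delta>}"
    by (auto simp: dist_real_def abs_minus_commute)
  show ?case
    unfolding split by (intro openin_Int openin_weak_star_evaluation insert.IH) auto
qed

lemma weak_star_nbhd_contains_finite_nbhd:
  assumes "openin weak_star U" "\<psi> \<in> U"
  obtains G \<delta> where "finite G" "\<delta> > 0"
    "{\<xi>. \<forall>g\<in>G. \<bar>blinfun_apply \<xi> g - blinfun_apply \<psi> g\<bar> < \<delta>} \<subseteq> U"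
proof -
  let ?N = "\<lambda>G \<delta> \<psi>. {\<xi>. \<forall>g\<in>G. \<bar>blinfun_apply \<xi> g - blinfun_apply \<psi> g\<bar> < \<delta>}"
  have "generate_topology_on {{\<phi>. blinfun_apply \<phi> f \<in> U} | f U. open (U :: real set)} U"
    using assms(1) unfolding weak_star_def by (rule openin_topology_generated_by)
  then have "\<exists>G \<delta>. finite G \<and> \<delta> > 0 \<and> ?N G \<delta> \<psi> \<subseteq> U"
    using assms(2)
  proof (induction arbitrary: \<psi>)
    case Empty
    then show ?case by simp
  next
    case (Int a b)
    obtain G1 \<delta>1 where 1: "finite G1" "\<delta>1 > 0" "?N G1 \<delta>1 \<psi> \<subseteq> a"
      using Int.IH(1)[of \<psi>] Int.prems by blast
    obtain G2 \<delta>2 where 2: "finite G2" "\<delta>2 > 0" "?N G2 \<delta>2 \<psi> \<subseteq> b"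
      using Int.IH(2)[of \<psi>] Int.prems by blast
    have "?N (G1 \<union> G2) (min \<delta>1 \<delta>2) \<psi> \<subseteq> ?N G1 \<delta>1 \<psi> \<inter> ?N G2 \<delta>2 \<psi>"
      by auto
    then have "?N (G1 \<union> G2) (min \<delta>1 \<delta>2) \<psi> \<subseteq> a \<inter> b"
      using 1(3) 2(3) by blast
    then show ?case using 1 2
      by (intro exI[of _ "G1 \<union> G2"] exI[of _ "min \<delta>1 \<delta>2"]) simp
  next
    case (UN K)
    then obtain k where "k \<in> K" "\<psi> \<in> k" by blast
    with UN.IH[of k \<psi>] show ?case by blast
  next
    case (Basis s)
    then obtain f V where s: "s = {\<phi>. blinfun_apply \<phi> f \<in> V}" "open V" "blinfun_apply \<psi> f \<in> V"
      by blast
    then obtain e where "e > 0" "ball (blinfun_apply \<psi> f) e \<subseteq> V"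
      using open_contains_ball by blast
    then have "?N {f} e \<psi> \<subseteq> s"
      using s by (auto simp: dist_real_def abs_minus_commute)
    then show ?case using \<open>e > 0\<close> by (intro exI[of _ "{f}"] exI[of _ e]) simp
  qed
  then show ?thesis using that by blast
qed

lemma in_weak_star_closure_of_iff:
  "\<psi> \<in> weak_star closure_of S \<longleftrightarrow>
     (\<forall>G \<delta>. finite G \<and> \<delta> > 0 \<longrightarrow> (\<exists>\<xi>\<in>S. \<forall>g\<in>G. \<bar>blinfun_apply \<xi> g - blinfun_apply \<psi> g\<bar> < \<delta>))"
proof (intro iffI allI impI)
  fix G :: "('a \<Rightarrow>\<^sub>L real) set" and \<delta> :: real
  assume \<psi>: "\<psi> \<in> weak_star closure_of S" and "finite G \<and> \<delta> > 0"
  define N where "N = {\<xi>. \<forall>g\<in>G. \<bar>blinfun_apply \<xi> g - blinfun_apply \<psi> g\<bar> < \<delta>}"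
  have "openin weak_star N" "\<psi> \<in> N"
    unfolding N_def using \<open>finite G \<and> \<delta> > 0\<close> by (simp_all add: openin_weak_star_finite_nbhd)
  moreover have "\<forall>T. \<psi> \<in> T \<and> openin weak_star T \<longrightarrow> (\<exists>\<xi>. \<xi> \<in> S \<and> \<xi> \<in> T)"
    using \<psi> by (simp add: in_closure_of)
  ultimately obtain \<xi> where "\<xi> \<in> S" "\<xi> \<in> N" by blast
  then show "\<exists>\<xi>\<in>S. \<forall>g\<in>G. \<bar>blinfun_apply \<xi> g - blinfun_apply \<psi> g\<bar> < \<delta>"
    unfolding N_def by blast
next
  assume approx: "\<forall>G \<delta>. finite G \<and> \<delta> > 0 \<longrightarrow> (\<exists>\<xi>\<in>S. \<forall>g\<in>G. \<bar>blinfun_apply \<xi> g - blinfun_apply \<psi> g\<bar> < \<delta>)"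
  show "\<psi> \<in> weak_star closure_of S"
    unfolding in_closure_of
  proof (intro conjI allI impI)
    fix T assume "\<psi> \<in> T \<and> openin weak_star T"
    then have "openin weak_star T" "\<psi> \<in> T" by simp_all
    then obtain G \<delta> where "finite G" "\<delta> > 0"
      and N: "{\<xi>. \<forall>g\<in>G. \<bar>blinfun_apply \<xi> g - blinfun_apply \<psi> g\<bar> < \<delta>} \<subseteq> T"
      by (rule weak_star_nbhd_contains_finite_nbhd)
    then obtain \<xi> where "\<xi> \<in> S" "\<forall>g\<in>G. \<bar>blinfun_apply \<xi> g - blinfun_apply \<psi> g\<bar> < \<delta>"
      using approx by blast
    then show "\<exists>y. y \<in> S \<and> y \<in> T" using N by blast
  qed simp
qed

lemma weak_star_closure_of_canon_embed_closure:
  "weak_star closure_of (canon_embed ` closure S) = weak_star closure_of (canon_embed ` S)"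
proof
  have "canon_embed ` closure S \<subseteq> weak_star closure_of (canon_embed ` S)"
    using continuous_map_image_closure_subset[OF continuous_map_canon_embed, of S] by simp
  then show "weak_star closure_of (canon_embed ` closure S) \<subseteq> weak_star closure_of (canon_embed ` S)"
    by (simp add: closure_of_minimal)
  show "weak_star closure_of (canon_embed ` S) \<subseteq> weak_star closure_of (canon_embed ` closure S)"
    by (intro closure_of_mono image_mono closure_subset)
qed

lemma norm_blinfun_le_of_upper_bound_on_cball:
  fixes h :: "'a::real_normed_vector \<Rightarrow>\<^sub>L real"
  assumes R: "0 \<le> R" and le: "\<And>x. norm x \<le> R \<Longrightarrow> blinfun_apply h x \<le> c"
  shows "R * norm h \<le> c"
proof (cases "R = 0")
  case True
  then show ?thesis using le[of 0] by simp
next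
  case False
  with R have R: "R > 0" by simp
  have "norm h \<le> c / R"
  proof (rule norm_blinfun_bound)
    show "0 \<le> c / R" using le[of 0] R by simp
    fix u :: 'a
    show "norm (blinfun_apply h u) \<le> c / R * norm u"
    proof (cases "u = 0")
      case False
      define v where "v = (R / norm u) *\<^sub>R u"
      have "norm v = R" "norm (- v) = R" unfolding v_def using False R by simp_all
      then have "\<bar>blinfun_apply h v\<bar> \<le> c"
        using le[of v] le[of "- v"] by (simp add: blinfun.minus_right)
      moreover have "blinfun_apply h v = R / norm u * blinfun_apply h u"
        unfolding v_def by (simp add: blinfun.scaleR_right)
      ultimately show ?thesis using False R by (simp add: abs_mult field_simps)
    qed simp
  qed
  then show ?thesis using R by (simp add: field_simps)
qed

text \<open>Take \<open>y\<close> minimising \<open>\<Sum>g\<in>G. (c g - g x)\<^sup>2\<close> over the ball up to \<open>t \<epsilon>\<close>, and compare it with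
  \<open>y + t (x - y)\<close> for a small step \<open>t\<close>.\<close>

lemma approximate_variational_inequality:
  fixes G :: "('a::real_normed_vector \<Rightarrow>\<^sub>L real) set" and c :: "('a \<Rightarrow>\<^sub>L real) \<Rightarrow> real"
  assumes G: "finite G" and R: "0 \<le> R" and \<epsilon>: "0 < \<epsilon>"
  shows "\<exists>y. norm y \<le> R \<and>
    (\<forall>x. norm x \<le> R \<longrightarrow> (\<Sum>g\<in>G. (c g - blinfun_apply g y) * (blinfun_apply g x - blinfun_apply g y)) \<le> \<epsilon>)"
proof -
  define Q where "Q x = (\<Sum>g\<in>G. (c g - blinfun_apply g x)\<^sup>2)" for x
  define D where "D = 4 * R\<^sup>2 * (\<Sum>g\<in>G. (norm g)\<^sup>2) + 1"
  define t where "t = min 1 (\<epsilon> / D)"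
  have D: "D > 0" unfolding D_def by (simp add: add_nonneg_pos sum_nonneg)
  have t: "0 < t" "t \<le> 1" "t * D \<le> \<epsilon>"
    using \<epsilon> D by (auto simp: t_def min_def field_simps)
  have bdd: "bdd_below (Q ` cball 0 R)"
    by (rule bdd_belowI[of _ 0]) (auto simp: Q_def intro: sum_nonneg)
  have "\<exists>q\<in>Q ` cball 0 R. q < Inf (Q ` cball 0 R) + t * \<epsilon>"
    using bdd R t \<epsilon> by (subst cInf_less_iff[symmetric]) auto
  then obtain y where y: "y \<in> cball 0 R" and y_inf: "Q y < Inf (Q ` cball 0 R) + t * \<epsilon>"
    by blast
  have Qy: "Q y < Q z + t * \<epsilon>" if "z \<in> cball 0 R" for z
    using y_inf cInf_lower[OF imageI[OF that] bdd] by linarith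
  have "(\<Sum>g\<in>G. (c g - blinfun_apply g y) * (blinfun_apply g x - blinfun_apply g y)) \<le> \<epsilon>"
    if x: "norm x \<le> R" for x
  proof -
    define V where "V = (\<Sum>g\<in>G. (c g - blinfun_apply g y) * (blinfun_apply g x - blinfun_apply g y))"
    define S where "S = (\<Sum>g\<in>G. (blinfun_apply g x - blinfun_apply g y)\<^sup>2)"
    have "S \<le> (\<Sum>g\<in>G. (norm g * (2 * R))\<^sup>2)"
      unfolding S_def
    proof (rule sum_mono)
      fix g
      have "\<bar>blinfun_apply g x - blinfun_apply g y\<bar> \<le> norm g * norm (x - y)"
        using norm_blinfun[of g "x - y"] by (simp add: blinfun.diff_right)
      also have "\<dots> \<le> norm g * (2 * R)"
        using norm_triangle_ineq4[of x y] x y by (intro mult_left_mono) auto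
      finally have "\<bar>blinfun_apply g x - blinfun_apply g y\<bar> \<le> \<bar>norm g * (2 * R)\<bar>" by simp
      then show "(blinfun_apply g x - blinfun_apply g y)\<^sup>2 \<le> (norm g * (2 * R))\<^sup>2"
        by (simp only: abs_le_square_iff)
    qed
    then have S: "S \<le> D"
      by (simp add: D_def power_mult_distrib sum_distrib_right mult.commute)
    have "(1 - t) *\<^sub>R y + t *\<^sub>R x \<in> cball 0 R"
      using y x t by (intro convexD_alt convex_cball) auto
    then have "Q y < Q ((1 - t) *\<^sub>R y + t *\<^sub>R x) + t * \<epsilon>" by (rule Qy)
    also have "Q ((1 - t) *\<^sub>R y + t *\<^sub>R x) = (\<Sum>g\<in>G. (c g - blinfun_apply g y)\<^sup>2
        - 2 * t * ((c g - blinfun_apply g y) * (blinfun_apply g x - blinfun_apply g y))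
        + t\<^sup>2 * (blinfun_apply g x - blinfun_apply g y)\<^sup>2)"
      unfolding Q_def
      by (intro sum.cong refl) (simp add: blinfun.add_right blinfun.diff_right blinfun.scaleR_right power2_eq_square algebra_simps)
    also have "\<dots> = Q y - 2 * t * V + t\<^sup>2 * S"
      unfolding Q_def V_def S_def by (simp add: sum.distrib sum_subtractf sum_distrib_left)
    finally have "2 * t * V < t * \<epsilon> + t * (t * S)" by (simp add: power2_eq_square)
    also have "t * (t * S) \<le> t * \<epsilon>"
      using S t by (intro mult_left_mono) (auto intro: order_trans[OF mult_left_mono[OF S]])
    finally show ?thesis unfolding V_def using t by simp
  qed
  then show ?thesis using y by auto
qed

text \<open>For \<open>y\<close> as above with \<open>c = \<phi>\<close>, the functional \<open>h = \<Sum>g\<in>G. (\<phi> g - g y) g\<close> is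
  nearly maximal over the ball at \<open>y\<close>, while \<open>\<phi> h - h y\<close> is the residual \<open>\<Sum>g\<in>G. (g y - \<phi> g)\<^sup>2\<close>;
  as \<open>\<phi> h \<le> R \<parallel>h\<parallel>\<close>, the residual is small.\<close>

lemma helly_finite_approximation:
  fixes \<phi> :: "('a::real_normed_vector \<Rightarrow>\<^sub>L real) \<Rightarrow>\<^sub>L real"
  assumes \<phi>: "norm \<phi> \<le> R" and G: "finite G" and \<eta>: "\<eta> > 0"
  shows "\<exists>x. norm x \<le> R \<and> (\<forall>g\<in>G. \<bar>blinfun_apply g x - blinfun_apply \<phi> g\<bar> < \<eta>)"
proof -
  have R: "0 \<le> R" using \<phi> norm_ge_zero[of \<phi>] by linarith
  obtain y where y: "norm y \<le> R" and variational: "\<And>x. norm x \<le> R \<Longrightarrow>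
      (\<Sum>g\<in>G. (blinfun_apply \<phi> g - blinfun_apply g y) * (blinfun_apply g x - blinfun_apply g y)) \<le> \<eta>\<^sup>2 / 2"
    using approximate_variational_inequality[OF G R, of "\<eta>\<^sup>2 / 2" "blinfun_apply \<phi>"] \<eta> by force
  define h where "h = (\<Sum>g\<in>G. (blinfun_apply \<phi> g - blinfun_apply g y) *\<^sub>R g)"
  have h_apply: "blinfun_apply h x = (\<Sum>g\<in>G. (blinfun_apply \<phi> g - blinfun_apply g y) * blinfun_apply g x)" for x
    unfolding h_def by (simp add: blinfun.sum_left blinfun.scaleR_left)
  have "blinfun_apply h x \<le> blinfun_apply h y + \<eta>\<^sup>2 / 2" if "norm x \<le> R" for x
    using variational[OF that] by (simp add: h_apply right_diff_distrib sum_subtractf)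
  then have "R * norm h \<le> blinfun_apply h y + \<eta>\<^sup>2 / 2"
    by (rule norm_blinfun_le_of_upper_bound_on_cball[OF R])
  moreover have "blinfun_apply \<phi> h \<le> R * norm h"
  proof -
    have "blinfun_apply \<phi> h \<le> norm \<phi> * norm h" using norm_blinfun[of \<phi> h] by simp
    also have "\<dots> \<le> R * norm h" using \<phi> by (simp add: mult_right_mono)
    finally show ?thesis .
  qed
  moreover have "blinfun_apply \<phi> h - blinfun_apply h y = (\<Sum>g\<in>G. (blinfun_apply g y - blinfun_apply \<phi> g)\<^sup>2)"
  proof -
    have "blinfun_apply \<phi> h - blinfun_apply h y = (\<Sum>g\<in>G. (blinfun_apply \<phi> g - blinfun_apply g y) * blinfun_apply \<phi> g
        - (blinfun_apply \<phi> g - blinfun_apply g y) * blinfun_apply g y)"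
      unfolding h_apply sum_subtractf by (simp add: h_def blinfun.sum_right blinfun.scaleR_right)
    also have "\<dots> = (\<Sum>g\<in>G. (blinfun_apply g y - blinfun_apply \<phi> g)\<^sup>2)"
      by (intro sum.cong refl) (simp add: power2_eq_square algebra_simps)
    finally show ?thesis .
  qed
  ultimately have residual: "(\<Sum>g\<in>G. (blinfun_apply g y - blinfun_apply \<phi> g)\<^sup>2) \<le> \<eta>\<^sup>2 / 2"
    by linarith
  have "\<bar>blinfun_apply g y - blinfun_apply \<phi> g\<bar> < \<eta>" if "g \<in> G" for g
  proof -
    have "\<bar>blinfun_apply g y - blinfun_apply \<phi> g\<bar>\<^sup>2 = (blinfun_apply g y - blinfun_apply \<phi> g)\<^sup>2"
      by simp
    also have "\<dots> \<le> (\<Sum>g\<in>G. (blinfun_apply g y - blinfun_apply \<phi> g)\<^sup>2)"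
      by (rule member_le_sum[OF that]) (simp_all add: G)
    also have "\<dots> < \<eta>\<^sup>2" using residual zero_less_power[OF \<eta>, of 2] by linarith
    finally show ?thesis using \<eta> by (simp add: power2_less_imp_less)
  qed
  then show ?thesis using y by blast
qed

lemma norm_blinfun_le_of_bounded_on_ball:
  fixes \<phi> :: "'a::real_normed_vector \<Rightarrow>\<^sub>L 'b::real_normed_vector"
  assumes r: "0 < r" and bound: "\<And>f. f \<in> ball f0 r \<Longrightarrow> norm (blinfun_apply \<phi> f) \<le> n"
  shows "norm \<phi> \<le> 4 * n / r"
proof (rule norm_blinfun_bound)
  have "norm (blinfun_apply \<phi> f0) \<le> n" using r by (intro bound) simp
  then have n: "0 \<le> n" using norm_ge_zero[of "blinfun_apply \<phi> f0"] by linarith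
  then show "0 \<le> 4 * n / r" using r by simp
  fix g
  show "norm (blinfun_apply \<phi> g) \<le> 4 * n / r * norm g"
  proof (cases "g = 0")
    case False
    define g' where "g' = (r / (2 * norm g)) *\<^sub>R g"
    have "norm g' = r / 2" unfolding g'_def using False r by simp
    then have "norm (blinfun_apply \<phi> (f0 + g')) \<le> n" "norm (blinfun_apply \<phi> f0) \<le> n"
      using r by (simp_all add: bound dist_norm)
    then have "norm (blinfun_apply \<phi> g') \<le> 2 * n"
      using norm_triangle_ineq4[of "blinfun_apply \<phi> (f0 + g')" "blinfun_apply \<phi> f0"]
      by (simp add: blinfun.add_right)
    moreover have "blinfun_apply \<phi> g' = (r / (2 * norm g)) *\<^sub>R blinfun_apply \<phi> g"
      unfolding g'_def by (simp add: blinfun.scaleR_right)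
    ultimately have "r / (2 * norm g) * norm (blinfun_apply \<phi> g) \<le> 2 * n"
      using r by simp
    then show ?thesis using r False by (simp add: field_simps)
  qed simp
qed

lemma uniform_boundedness:
  fixes \<Phi> :: "('a::banach \<Rightarrow>\<^sub>L 'b::real_normed_vector) set"
  assumes pointwise: "\<And>f. bounded ((\<lambda>\<phi>. blinfun_apply \<phi> f) ` \<Phi>)"
  shows "\<exists>M. \<forall>\<phi>\<in>\<Phi>. norm \<phi> \<le> M"
proof -
  define E where "E n = {f. \<forall>\<phi>\<in>\<Phi>. norm (blinfun_apply \<phi> f) \<le> real n}" for n :: nat
  have closed_E: "closed (E n)" for n
    unfolding E_def Collect_ball_eq
    by (intro closed_INT ballI closed_Collect_le continuous_intros)
  have "f \<in> \<Union>(range E)" for f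
  proof -
    from pointwise[of f] obtain m where "\<forall>y\<in>(\<lambda>\<phi>. blinfun_apply \<phi> f) ` \<Phi>. norm y \<le> m"
      unfolding bounded_iff ..
    then have m: "\<And>\<phi>. \<phi> \<in> \<Phi> \<Longrightarrow> norm (blinfun_apply \<phi> f) \<le> m" by simp
    have "f \<in> E (nat \<lceil>m\<rceil>)"
      unfolding E_def using m real_nat_ceiling_ge[of m] by (auto intro: order_trans)
    then show ?thesis by blast
  qed
  then have cover: "\<Union>(range E) = UNIV" by blast
  have "\<exists>n. interior (E n) \<noteq> {}"
  proof (rule ccontr)
    assume "\<nexists>n. interior (E n) \<noteq> {}"
    then have "euclidean interior_of \<Union>(range E) = {}"
      by (intro Baire_category_alt) (auto simp: completely_metrizable_space_euclidean closed_E)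
    then show False using cover by simp
  qed
  then obtain n f0 where "f0 \<in> interior (E n)" by blast
  then obtain r where r: "r > 0" and ball: "ball f0 r \<subseteq> E n" by (meson mem_interior)
  have "norm \<phi> \<le> 4 * real n / r" if "\<phi> \<in> \<Phi>" for \<phi>
  proof (rule norm_blinfun_le_of_bounded_on_ball[OF r])
    fix f assume "f \<in> ball f0 r"
    with ball that show "norm (blinfun_apply \<phi> f) \<le> real n" unfolding E_def by blast
  qed
  then show ?thesis by blast
qed

lemma compactin_weak_star_imp_bounded:
  assumes "compactin weak_star C"
  shows "\<exists>M. \<forall>\<phi>\<in>C. norm \<phi> \<le> M"
proof (rule uniform_boundedness)
  fix f
  have "compactin euclideanreal ((\<lambda>\<phi>. blinfun_apply \<phi> f) ` C)"
    by (rule image_compactin[OF assms continuous_map_weak_star_evaluation])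
  then show "bounded ((\<lambda>\<phi>. blinfun_apply \<phi> f) ` C)" by (simp add: compact_imp_bounded)
qed

lemma filtering_family_reverse_inclusion:
  assumes directed: "\<And>A B. A \<in> \<Gamma> \<Longrightarrow> B \<in> \<Gamma> \<Longrightarrow> \<exists>D\<in>\<Gamma>. D \<subseteq> A \<and> D \<subseteq> B"
  shows "filtering_family \<Gamma> {(A, B). A \<in> \<Gamma> \<and> B \<in> \<Gamma> \<and> B \<subseteq> A} (\<lambda>A. A)"
proof -
  let ?r = "{(A, B). A \<in> \<Gamma> \<and> B \<in> \<Gamma> \<and> B \<subseteq> A}"
  have "partial_order_on \<Gamma> ?r"
    unfolding partial_order_on_def preorder_on_def refl_on_def trans_def antisym_def by blast
  moreover have "\<exists>D\<in>\<Gamma>. (A, D) \<in> ?r \<and> (B, D) \<in> ?r" if "A \<in> \<Gamma>" "B \<in> \<Gamma>" for A B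
    using directed[OF that] that by blast
  ultimately show ?thesis
    unfolding filtering_family_def filtering_poset_def by blast
qed

text \<open>The norm closures of these sets are the \<open>C\<^sub>\<alpha>\<close> of the theorem, indexed by \<open>\<alpha> = (F, e)\<close>.\<close>

definition approximants ::
    "(('a::real_normed_vector \<Rightarrow>\<^sub>L real) \<Rightarrow>\<^sub>L real) set \<Rightarrow> real \<Rightarrow> ('a \<Rightarrow>\<^sub>L real) set \<Rightarrow> real \<Rightarrow> 'a set"
  where "approximants C M F e =
    {x. norm x \<le> M \<and> (\<exists>\<phi>\<in>C. \<forall>f\<in>F. \<bar>blinfun_apply f x - blinfun_apply \<phi> f\<bar> \<le> e)}"

lemma approximants_antimono:
  assumes "F \<subseteq> F'" "e' \<le> e"
  shows "approximants C M F' e' \<subseteq> approximants C M F e"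
proof
  fix x assume "x \<in> approximants C M F' e'"
  then obtain \<phi> where "norm x \<le> M" "\<phi> \<in> C"
    and close: "\<forall>f\<in>F'. \<bar>blinfun_apply f x - blinfun_apply \<phi> f\<bar> \<le> e'"
    unfolding approximants_def by blast
  moreover have "\<forall>f\<in>F. \<bar>blinfun_apply f x - blinfun_apply \<phi> f\<bar> \<le> e"
    using close assms by (meson order_trans subsetD)
  ultimately show "x \<in> approximants C M F e"
    unfolding approximants_def by blast
qed

lemma approximants_subset_cball: "approximants C M F e \<subseteq> cball 0 M"
  by (auto simp: approximants_def)

lemma convex_approximants:
  assumes "convex C"
  shows "convex (approximants C M F e)"
proof (rule convexI)
  fix x y :: 'a and u v :: real
  assume "x \<in> approximants C M F e" "y \<in> approximants C M F e" and uv: "0 \<le> u" "0 \<le> v" "u + v = 1"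
  then obtain \<phi> \<psi> where x: "norm x \<le> M" "\<phi> \<in> C" "\<forall>f\<in>F. \<bar>blinfun_apply f x - blinfun_apply \<phi> f\<bar> \<le> e"
    and y: "norm y \<le> M" "\<psi> \<in> C" "\<forall>f\<in>F. \<bar>blinfun_apply f y - blinfun_apply \<psi> f\<bar> \<le> e"
    unfolding approximants_def by blast
  have "u *\<^sub>R x + v *\<^sub>R y \<in> cball 0 M"
    using x y uv by (intro convexD[OF convex_cball]) auto
  moreover have "u *\<^sub>R \<phi> + v *\<^sub>R \<psi> \<in> C"
    using assms x y uv by (intro convexD) auto
  moreover have "\<bar>blinfun_apply f (u *\<^sub>R x + v *\<^sub>R y) - blinfun_apply (u *\<^sub>R \<phi> + v *\<^sub>R \<psi>) f\<bar> \<le> e"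
    if f: "f \<in> F" for f
  proof -
    have "\<bar>blinfun_apply f (u *\<^sub>R x + v *\<^sub>R y) - blinfun_apply (u *\<^sub>R \<phi> + v *\<^sub>R \<psi>) f\<bar>
        = \<bar>u * (blinfun_apply f x - blinfun_apply \<phi> f) + v * (blinfun_apply f y - blinfun_apply \<psi> f)\<bar>"
      by (simp add: blinfun.add_right blinfun.scaleR_right blinfun.add_left blinfun.scaleR_left algebra_simps)
    also have "\<dots> \<le> u * \<bar>blinfun_apply f x - blinfun_apply \<phi> f\<bar> + v * \<bar>blinfun_apply f y - blinfun_apply \<psi> f\<bar>"
      using uv by (simp add: abs_triangle_ineq[THEN order_trans] abs_mult)
    also have "\<dots> \<le> u * e + v * e"
      using uv x(3) y(3) f by (intro add_mono mult_left_mono) auto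
    finally show ?thesis using uv by (simp add: distrib_right[symmetric])
  qed
  ultimately show "u *\<^sub>R x + v *\<^sub>R y \<in> approximants C M F e"
    unfolding approximants_def by auto
qed

lemma filtering_family_closure_approximants:
  fixes C :: "(('a::real_normed_vector \<Rightarrow>\<^sub>L real) \<Rightarrow>\<^sub>L real) set" and M :: real
  defines "\<Gamma> \<equiv> (\<lambda>(F, e). closure (approximants C M F e)) ` {(F, e). finite F \<and> 0 < e}"
  shows "filtering_family \<Gamma> {(A, B). A \<in> \<Gamma> \<and> B \<in> \<Gamma> \<and> B \<subseteq> A} (\<lambda>A. A)"
proof (rule filtering_family_reverse_inclusion)
  fix A B assume "A \<in> \<Gamma>" "B \<in> \<Gamma>"
  then obtain F1 e1 F2 e2 where "finite F1" "0 < e1" "finite F2" "0 < e2"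
    and A: "A = closure (approximants C M F1 e1)" and B: "B = closure (approximants C M F2 e2)"
    unfolding \<Gamma>_def by auto
  then have "closure (approximants C M (F1 \<union> F2) (min e1 e2)) \<in> \<Gamma>"
    unfolding \<Gamma>_def by (intro rev_image_eqI[of "(F1 \<union> F2, min e1 e2)"]) simp_all
  moreover have "closure (approximants C M (F1 \<union> F2) (min e1 e2)) \<subseteq> A"
    "closure (approximants C M (F1 \<union> F2) (min e1 e2)) \<subseteq> B"
    unfolding A B by (intro closure_mono approximants_antimono; simp)+
  ultimately show "\<exists>D\<in>\<Gamma>. D \<subseteq> A \<and> D \<subseteq> B" by blast
qed

lemma subset_weak_star_closure_approximants:
  assumes M: "\<And>\<phi>. \<phi> \<in> C \<Longrightarrow> norm \<phi> \<le> M" and F: "finite F" and e: "0 < e"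
  shows "C \<subseteq> weak_star closure_of (canon_embed ` approximants C M F e)"
proof
  fix \<phi> assume \<phi>: "\<phi> \<in> C"
  show "\<phi> \<in> weak_star closure_of (canon_embed ` approximants C M F e)"
    unfolding in_weak_star_closure_of_iff
  proof (intro allI impI)
    fix G :: "('a \<Rightarrow>\<^sub>L real) set" and \<delta> :: real
    assume "finite G \<and> 0 < \<delta>"
    then obtain x where x: "norm x \<le> M"
      and close: "\<forall>g\<in>F \<union> G. \<bar>blinfun_apply g x - blinfun_apply \<phi> g\<bar> < min e \<delta>"
      using helly_finite_approximation[OF M[OF \<phi>], of "F \<union> G" "min e \<delta>"] F e by auto
    then have "x \<in> approximants C M F e"
      unfolding approximants_def using \<phi> by (auto intro: less_imp_le)
    moreover have "\<forall>g\<in>G. \<bar>blinfun_apply (canon_embed x) g - blinfun_apply \<phi> g\<bar> < \<delta>"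
      using close by simp
    ultimately show "\<exists>\<xi>\<in>canon_embed ` approximants C M F e.
        \<forall>g\<in>G. \<bar>blinfun_apply \<xi> g - blinfun_apply \<phi> g\<bar> < \<delta>"
      by blast
  qed
qed

lemma compactin_weak_star_separated_by_finite:
  assumes compact: "compactin weak_star C" and \<psi>: "\<psi> \<notin> C"
  obtains F s where "finite F" "0 < s" "\<And>\<phi>. \<phi> \<in> C \<Longrightarrow> \<exists>f\<in>F. s < \<bar>blinfun_apply \<phi> f - blinfun_apply \<psi> f\<bar>"
proof -
  define W where "W p = {\<xi>. snd p < \<bar>blinfun_apply \<xi> (fst p) - blinfun_apply \<psi> (fst p)\<bar>}"
    for p :: "('a \<Rightarrow>\<^sub>L real) \<times> real"
  have "openin weak_star (W p)" for p
  proof -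
    have eq: "W p = {\<xi>. blinfun_apply \<xi> (fst p) \<in> {y. snd p < \<bar>y - blinfun_apply \<psi> (fst p)\<bar>}}"
      unfolding W_def by simp
    show ?thesis
      unfolding eq by (intro openin_weak_star_evaluation open_Collect_less continuous_intros)
  qed
  then have "\<forall>U\<in>W ` {p. 0 < snd p}. openin weak_star U" by blast
  moreover have "C \<subseteq> \<Union>(W ` {p. 0 < snd p})"
  proof
    fix \<phi> assume "\<phi> \<in> C"
    with \<psi> obtain f where "blinfun_apply \<phi> f \<noteq> blinfun_apply \<psi> f"
      by (metis blinfun_eqI)
    then have "(f, \<bar>blinfun_apply \<phi> f - blinfun_apply \<psi> f\<bar> / 2) \<in> {p. 0 < snd p}"
      and "\<phi> \<in> W (f, \<bar>blinfun_apply \<phi> f - blinfun_apply \<psi> f\<bar> / 2)"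
      unfolding W_def by simp_all
    then show "\<phi> \<in> \<Union>(W ` {p. 0 < snd p})" by blast
  qed
  ultimately obtain \<W> where "finite \<W>" "\<W> \<subseteq> W ` {p. 0 < snd p}" "C \<subseteq> \<Union>\<W>"
    using compact unfolding compactin_def by (elim conjE allE[of _ "W ` {p. 0 < snd p}"] impE) auto
  then obtain P where P: "finite P" "P \<subseteq> {p. 0 < snd p}" and cover: "C \<subseteq> \<Union>(W ` P)"
    using finite_subset_image[of \<W> W "{p. 0 < snd p}"] by blast
  define s where "s = Min (insert 1 (snd ` P))"
  have "0 < s" unfolding s_def using P by auto
  moreover have "\<exists>f\<in>fst ` P. s < \<bar>blinfun_apply \<phi> f - blinfun_apply \<psi> f\<bar>" if \<phi>: "\<phi> \<in> C" for \<phi>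
  proof -
    obtain p where p: "p \<in> P" "\<phi> \<in> W p" using cover \<phi> by blast
    moreover have "s \<le> snd p" unfolding s_def using P p by simp
    ultimately have "s < \<bar>blinfun_apply \<phi> (fst p) - blinfun_apply \<psi> (fst p)\<bar>"
      unfolding W_def by simp
    then show ?thesis using p by blast
  qed
  moreover have "finite (fst ` P)" using P by simp
  ultimately show ?thesis using that by blast
qed

lemma not_in_weak_star_closure_approximants:
  assumes "compactin weak_star C" "\<psi> \<notin> C"
  obtains F e where "finite F" "0 < e"
    "\<psi> \<notin> weak_star closure_of (canon_embed ` approximants C M F e)"
proof -
  obtain F s where F: "finite F" and s: "0 < s"
    and separated: "\<And>\<phi>. \<phi> \<in> C \<Longrightarrow> \<exists>f\<in>F. s < \<bar>blinfun_apply \<phi> f - blinfun_apply \<psi> f\<bar>"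
    using compactin_weak_star_separated_by_finite[OF assms] by blast
  have "\<psi> \<notin> weak_star closure_of (canon_embed ` approximants C M F (s / 2))"
  proof
    assume "\<psi> \<in> weak_star closure_of (canon_embed ` approximants C M F (s / 2))"
    then have "\<exists>\<xi>\<in>canon_embed ` approximants C M F (s / 2).
        \<forall>f\<in>F. \<bar>blinfun_apply \<xi> f - blinfun_apply \<psi> f\<bar> < s / 2"
      using F s unfolding in_weak_star_closure_of_iff by (meson half_gt_zero)
    then obtain x where "x \<in> approximants C M F (s / 2)"
      and near_\<psi>: "\<forall>f\<in>F. \<bar>blinfun_apply f x - blinfun_apply \<psi> f\<bar> < s / 2"
      by auto
    then obtain \<phi> where "\<phi> \<in> C" and near_\<phi>: "\<forall>f\<in>F. \<bar>blinfun_apply f x - blinfun_apply \<phi> f\<bar> \<le> s / 2"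
      unfolding approximants_def by blast
    then obtain f where "f \<in> F" and far: "s < \<bar>blinfun_apply \<phi> f - blinfun_apply \<psi> f\<bar>"
      using separated by blast
    then have "\<bar>blinfun_apply f x - blinfun_apply \<phi> f\<bar> \<le> s / 2" "\<bar>blinfun_apply f x - blinfun_apply \<psi> f\<bar> < s / 2"
      using near_\<phi> near_\<psi> by simp_all
    with far show False unfolding abs_le_iff abs_less_iff by linarith
  qed
  then show ?thesis using that[OF F, of "s / 2"] s by simp
qed

lemma Inter_weak_star_closure_approximants:
  assumes compact: "compactin weak_star C" and M: "\<And>\<phi>. \<phi> \<in> C \<Longrightarrow> norm \<phi> \<le> M"
  shows "C = (\<Inter>(F, e)\<in>{(F, e). finite F \<and> 0 < e}.
                weak_star closure_of (canon_embed ` closure (approximants C M F e)))"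
  unfolding weak_star_closure_of_canon_embed_closure
proof (intro equalityI subsetI)
  fix \<phi> assume "\<phi> \<in> C"
  then show "\<phi> \<in> (\<Inter>(F, e)\<in>{(F, e). finite F \<and> 0 < e}. weak_star closure_of (canon_embed ` approximants C M F e))"
    using subset_weak_star_closure_approximants[OF M] by blast
next
  fix \<psi> assume \<psi>: "\<psi> \<in> (\<Inter>(F, e)\<in>{(F, e). finite F \<and> 0 < e}. weak_star closure_of (canon_embed ` approximants C M F e))"
  show "\<psi> \<in> C"
  proof (rule ccontr)
    assume "\<psi> \<notin> C"
    then obtain F e where "finite F" "0 < e" "\<psi> \<notin> weak_star closure_of (canon_embed ` approximants C M F e)"
      using not_in_weak_star_closure_approximants[OF compact] by blast
    with \<psi> show False by blast
  qed
qed

theorem mainTheorem2: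
  fixes C :: "(('a::banach \<Rightarrow>\<^sub>L real) \<Rightarrow>\<^sub>L real) set"
  assumes "convex C"
    and "compactin weak_star C"
  shows "\<exists>(\<Gamma> :: 'a set set) r Cs.
           filtering_family \<Gamma> r Cs \<and>
           (\<forall>\<alpha>\<in>\<Gamma>. convex (Cs \<alpha>) \<and> bounded (Cs \<alpha>) \<and> closed (Cs \<alpha>)) \<and>
           C = (\<Inter>\<alpha>\<in>\<Gamma>. weak_star closure_of (canon_embed ` Cs \<alpha>))"
proof -
  obtain M where M: "\<And>\<phi>. \<phi> \<in> C \<Longrightarrow> norm \<phi> \<le> M"
    using compactin_weak_star_imp_bounded[OF assms(2)] by blast
  define I where "I = {(F :: ('a \<Rightarrow>\<^sub>L real) set, e :: real). finite F \<and> 0 < e}"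
  define \<Gamma> where "\<Gamma> = (\<lambda>(F, e). closure (approximants C M F e)) ` I"
  have "filtering_family \<Gamma> {(A, B). A \<in> \<Gamma> \<and> B \<in> \<Gamma> \<and> B \<subseteq> A} (\<lambda>A. A)"
    unfolding \<Gamma>_def I_def by (rule filtering_family_closure_approximants)
  moreover have "convex A \<and> bounded A \<and> closed A" if "A \<in> \<Gamma>" for A
    using that unfolding \<Gamma>_def
    by (auto intro: convex_closure convex_approximants[OF assms(1)] bounded_closure
        bounded_subset[OF bounded_cball approximants_subset_cball])
  moreover have "C = (\<Inter>A\<in>\<Gamma>. weak_star closure_of (canon_embed ` A))"
    using Inter_weak_star_closure_approximants[OF assms(2) M] unfolding \<Gamma>_def I_def by (simp add: case_prod_beta)
  ultimately show ?thesis by blast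
qed

end
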